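(* Let $\sigma=1^a21^b$ with $a\ge1$, $b\ge0$, and let $k=a+b+1$. Let $T$ be a set of patterns and $T'=\{1(\tau+1):\tau\in T\}$. For a set of patterns $R$ let $f_n(\sigma,R)$ be the number of partitions of $[n]$ avoiding $\sigma$ and every pattern in $R$. Then for every $n\ge1$, \[f_n(\sigma,T')=\sum_{i=1}^{k-2}f_{n-i}(\sigma,T)\binom{n-1}{i-1}+\sum_{i=k-1}^{n}f_{n-i}(\sigma,T)\binom{n-i+k-3}{k-3},\] where $f_m=0$ for $m<0$, and binomial coefficients $\binom{m}{-1}$ (arising only when $k=2$) are interpreted as $1$ if $m=-1$ and $0$ if $m\ge0$.
   Context: Set partitions are written in canonical sequential form (restricted growth words). Pattern containment means having a subsequence order-isomorphic to the pattern. For a word $\tau$, $\tau+1$ adds $1$ to every letter, so $1(\tau+1)$ is the pattern obtained by prefixing a new smallest block containing only the first element; $1^a$ denotes $a$ copies of $1$. *)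

theory Defs
  imports Main
begin

(* Restricted growth words (canonical sequential form), letters starting at 1:
   first letter is 1, each letter is at most 1 + the maximum of the previous letters. *)
fun rgw_aux :: "nat \<Rightarrow> nat list \<Rightarrow> bool" where
  "rgw_aux m [] = True"
| "rgw_aux m (x # xs) = (1 \<le> x \<and> x \<le> m + 1 \<and> rgw_aux (max m x) xs)"

definition rgw :: "nat list \<Rightarrow> bool" where
  "rgw w = rgw_aux 0 w"

definition order_iso :: "nat list \<Rightarrow> nat list \<Rightarrow> bool" where
  "order_iso u v \<longleftrightarrow> length u = length v \<and>
     (\<forall>i<length u. \<forall>j<length u. (u ! i < u ! j \<longleftrightarrow> v ! i < v ! j))"

definition contains :: "nat list \<Rightarrow> nat list \<Rightarrow> bool" where
  "contains w p \<longleftrightarrow> (\<exists>I. order_iso (nths w I) p)"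

definition avoids :: "nat list \<Rightarrow> nat list \<Rightarrow> bool" where
  "avoids w p \<longleftrightarrow> \<not> contains w p"

definition fcount :: "nat list \<Rightarrow> nat list set \<Rightarrow> int \<Rightarrow> int" where
  "fcount \<sigma> R m = (if m < 0 then 0 else
     int (card {w. rgw w \<and> length w = nat m \<and> avoids w \<sigma> \<and> (\<forall>\<tau>\<in>R. avoids w \<tau>)}))"

definition gbinom :: "int \<Rightarrow> int \<Rightarrow> int" where
  "gbinom m j = (if j = -1 then (if m = -1 then 1 else 0)
                 else if m < 0 \<or> j < 0 then 0 else int (nat m choose nat j))"

definition shift1 :: "nat list \<Rightarrow> nat list" where
  "shift1 \<tau> = 1 # map Suc \<tau>"

end

theory Submission
  imports Defs "HOL-Library.Sublist"
begin

text \<open>A partition of \<open>[n]\<close> is a word \<open>1 # W\<close>. Record in a Boolean mask \<open>M\<close> which letters of \<open>W\<close>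
  are \<open>1\<close>, and let \<open>v\<close> be the word of the remaining letters, each lowered by one; \<open>v\<close> is again a
  partition and \<open>(M, v)\<close> determines the word. An occurrence of \<open>1(\<tau>+1)\<close> can always use the leading
  \<open>1\<close>, so the word avoids \<open>1(\<tau>+1)\<close> iff \<open>v\<close> avoids \<open>\<tau>\<close>. An occurrence of \<open>\<sigma> = 1\<^sup>a21\<^sup>b\<close> either avoids
  the letter \<open>1\<close>, and is then an occurrence of \<open>\<sigma>\<close> in \<open>v\<close>, or uses \<open>1\<close> as its small letter; with the
  leading \<open>1\<close> absorbed, the latter means that \<open>M\<close> contains \<open>True\<^sup>a\<^sup>-\<^sup>1 False True\<^sup>b\<close> as a subsequence.
  A mask of length \<open>L\<close> with \<open>j\<close> entries \<open>True\<close> avoids \<open>True\<^sup>p False True\<^sup>q\<close> automatically if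
  \<open>j < p + q\<close>, and otherwise iff no \<open>False\<close> lies between the \<open>p\<close>-th and the \<open>(j - q + 1)\<close>-th \<open>True\<close>,
  leaving \<open>p + q\<close> gaps for the \<open>L - j\<close> entries \<open>False\<close>. Summing over \<open>j\<close> gives the two sums.\<close>

definition spike :: "nat \<Rightarrow> nat \<Rightarrow> 'a \<Rightarrow> 'a \<Rightarrow> 'a list" where
  "spike p q x y = replicate p x @ [y] @ replicate q x"

lemma spike_0: "spike 0 q x y = y # replicate q x"
  and spike_Suc: "spike (Suc p) q x y = x # spike p q x y"
  by (simp_all add: spike_def)

lemma length_spike [simp]: "length (spike p q x y) = p + 1 + q"
  by (simp add: spike_def)

lemma nth_spike: "i < p + 1 + q \<Longrightarrow> spike p q x y ! i = (if i = p then y else x)"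
  by (auto simp: spike_def nth_append)

lemma map_spike: "map f (spike p q x y) = spike p q (f x) (f y)"
  by (simp add: spike_def)

lemma set_spike: "p \<ge> 1 \<Longrightarrow> set (spike p q x y) = {x, y}"
  by (cases p) (auto simp: spike_def)

subsection \<open>Boolean masks avoiding a spike\<close>

lemma finite_bool_lists_length: "finite {M :: bool list. length M = L \<and> P M}"
  using finite_lists_length_eq[of "UNIV :: bool set" L] by (rule rev_finite_subset) auto

lemma card_bool_lists_Suc:
  "card {M :: bool list. length M = Suc L \<and> P M} =
   card {M. length M = L \<and> P (True # M)} + card {M. length M = L \<and> P (False # M)}"
proof -
  have split: "{M :: bool list. length M = Suc L \<and> P M} =
      Cons True ` {M. length M = L \<and> P (True # M)} \<union> Cons False ` {M. length M = L \<and> P (False # M)}"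
    (is "?A = ?B")
  proof
    show "?A \<subseteq> ?B"
    proof
      fix M assume "M \<in> ?A"
      then obtain x M' where "M = x # M'" "length M' = L" "P (x # M')"
        by (auto simp: length_Suc_conv)
      then show "M \<in> ?B" by (cases x) auto
    qed
  qed auto
  show ?thesis
    unfolding split by (subst card_Un_disjoint) (auto simp: card_image finite_bool_lists_length)
qed

lemma card_bool_lists_count_True: "card {M. length M = L \<and> count_list M True = j} = L choose j"
proof (induction L arbitrary: j)
  case 0
  have "{M :: bool list. length M = 0 \<and> count_list M True = j} = (if j = 0 then {[]} else {})"
    by auto
  then show ?case by simp
next
  case (Suc L)
  then show ?case
    by (cases j) (simp_all add: card_bool_lists_Suc)
qed

lemma count_list_True_False: "count_list M True + count_list M False = length M"
  by (induction M) auto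

lemma subseq_replicate_True_iff: "subseq (replicate q True) M \<longleftrightarrow> q \<le> count_list M True"
proof (induction M arbitrary: q)
  case Nil
  then show ?case by (cases q) auto
next
  case (Cons x M)
  show ?case
  proof (cases q)
    case (Suc q')
    then show ?thesis using Cons.IH[of q] Cons.IH[of q'] by (cases x) auto
  qed simp
qed

lemma gbinom_of_nat [simp]: "gbinom (int m) (int j) = int (m choose j)"
  by (simp add: gbinom_def)

lemma gbinom_pascal: "r \<ge> 0 \<Longrightarrow> gbinom m (r - 1) + gbinom m r = gbinom (m + 1) r"
proof (cases "r = 0")
  case True
  then show ?thesis by (simp add: gbinom_def)
next
  case False
  moreover assume "r \<ge> 0"
  ultimately obtain s where r: "r = int (Suc s)"
    by (metis nat_0_iff nat_eq_iff2 not0_implies_Suc)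
  consider "m \<ge> 0" | "m = -1" | "m < -1" by linarith
  then show ?thesis
  proof cases
    case 1
    then obtain m' where m: "m = int m'" using nonneg_int_cases by blast
    have "r - 1 = int s" "m + 1 = int (Suc m')" using r m by simp_all
    then show ?thesis by (simp only: r m gbinom_of_nat binomial_Suc_Suc of_nat_add)
  qed (simp_all add: r gbinom_def)
qed

definition spike_free_masks :: "nat \<Rightarrow> nat \<Rightarrow> nat \<Rightarrow> nat \<Rightarrow> bool list set" where
  "spike_free_masks p q L j =
     {M. length M = L \<and> count_list M True = j \<and> \<not> subseq (spike p q True False) M}"

definition spike_free_count :: "nat \<Rightarrow> nat \<Rightarrow> nat \<Rightarrow> int" where
  "spike_free_count c L j =
     (if j < c then int (L choose j) else gbinom (int L - int j + int c - 1) (int c - 1))"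

lemma spike_free_count_Suc:
  "spike_free_count c L j + spike_free_count (Suc c) L (Suc j) =
   spike_free_count (Suc c) (Suc L) (Suc j)"
proof (cases "j < c")
  case True
  then show ?thesis by (simp add: spike_free_count_def)
next
  case False
  have "gbinom (int L - int j + int c - 1) (int c - 1) + gbinom (int L - int j + int c - 1) (int c)
      = gbinom (int L - int j + int c - 1 + 1) (int c)"
    by (rule gbinom_pascal) simp
  then show ?thesis
    using False by (simp add: spike_free_count_def algebra_simps)
qed

lemma spike_free_count_Suc_leading_False:
  "spike_free_count q L j + (if Suc j < q then int (L choose Suc j) else 0) =
   spike_free_count q (Suc L) (Suc j)"
proof -
  consider "Suc j < q" | "Suc j = q" | "Suc j > q" by linarith
  then show ?thesis
    by cases (auto simp: spike_free_count_def gbinom_def)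
qed

lemma card_spike_free_masks: "int (card (spike_free_masks p q L j)) = spike_free_count (p + q) L j"
proof (induction L arbitrary: p j)
  case 0
  have "spike_free_masks p q 0 j = (if j = 0 then {[]} else {})"
    by (cases p) (auto simp: spike_free_masks_def spike_0 spike_Suc)
  then show ?case by (auto simp: spike_free_count_def gbinom_def)
next
  case (Suc L)
  let ?head = "\<lambda>x. {M. length M = L \<and> count_list (x # M) True = j \<and>
                        \<not> subseq (spike p q True False) (x # M)}"
  have split: "card (spike_free_masks p q (Suc L) j) = card (?head True) + card (?head False)"
    unfolding spike_free_masks_def by (rule card_bool_lists_Suc)
  show ?case
  proof (cases p)
    case p: (Suc p')
    have head_False: "?head False = spike_free_masks p q L j"
      by (auto simp: spike_free_masks_def p spike_Suc)
    show ?thesis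
    proof (cases j)
      case 0
      then have "?head True = {}" by auto
      then show ?thesis
        using split head_False Suc.IH[of p j] 0 p by (simp add: spike_free_count_def)
    next
      case j: (Suc j')
      have "?head True = spike_free_masks p' q L j'"
        by (auto simp: spike_free_masks_def p j spike_Suc)
      then show ?thesis
        using split head_False Suc.IH[of p j] Suc.IH[of p' j'] spike_free_count_Suc[of "p' + q" L j']
        by (simp add: p j)
    qed
  next
    case p: 0
    have head_False: "int (card (?head False)) = (if j < q then int (L choose j) else 0)"
    proof -
      have "?head False = (if j < q then {M. length M = L \<and> count_list M True = j} else {})"
        by (auto simp: p spike_0 subseq_replicate_True_iff)
      then show ?thesis by (simp add: card_bool_lists_count_True)
    qed
    show ?thesis
    proof (cases j)
      case 0
      then have "?head True = {}" by auto
      then show ?thesis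
        using split head_False 0 p by (simp add: spike_free_count_def gbinom_def)
    next
      case j: (Suc j')
      have "?head True = spike_free_masks 0 q L j'"
        by (auto simp: spike_free_masks_def p j spike_0)
      then show ?thesis
        using split head_False[unfolded j] Suc.IH[of 0 j'] spike_free_count_Suc_leading_False[of q L j']
        by (simp add: p j)
    qed
  qed
qed

subsection \<open>Splitting a word at its ones\<close>

text \<open>Only meaningful when \<open>length v = count_list M False\<close>; the third equation is junk.\<close>
fun fill :: "bool list \<Rightarrow> nat list \<Rightarrow> nat list" where
  "fill [] v = []"
| "fill (True # M) v = 1 # fill M v"
| "fill (False # M) [] = []"
| "fill (False # M) (y # v) = Suc y # fill M v"

lemma length_fill: "length v = count_list M False \<Longrightarrow> length (fill M v) = length M"
  by (induction M v rule: fill.induct) auto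

lemma fill_pos: "x \<in> set (fill M v) \<Longrightarrow> 1 \<le> x"
  by (induction M v rule: fill.induct) auto

lemma map_eq_1_fill:
  "\<forall>y\<in>set v. 1 \<le> y \<Longrightarrow> length v = count_list M False \<Longrightarrow> map (\<lambda>x. x = 1) (fill M v) = M"
  by (induction M v rule: fill.induct) auto

lemma filter_neq_1_fill:
  "\<forall>y\<in>set v. 1 \<le> y \<Longrightarrow> length v = count_list M False \<Longrightarrow>
   filter (\<lambda>x. x \<noteq> 1) (fill M v) = map Suc v"
  by (induction M v rule: fill.induct) auto

lemma fill_map_eq_1_filter_neq_1:
  "\<forall>x\<in>set w. 1 \<le> x \<Longrightarrow> fill (map (\<lambda>x. x = 1) w) (map (\<lambda>x. x - 1) (filter (\<lambda>x. x \<noteq> 1) w)) = w"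
  by (induction w) auto

lemma fill_inject:
  assumes "\<forall>y\<in>set v. 1 \<le> y" "length v = count_list M False"
    and "\<forall>y\<in>set v'. 1 \<le> y" "length v' = count_list M' False"
    and "fill M v = fill M' v'"
  shows "M = M' \<and> v = v'"
  using map_eq_1_fill[OF assms(1,2)] map_eq_1_fill[OF assms(3,4)]
    filter_neq_1_fill[OF assms(1,2)] filter_neq_1_fill[OF assms(3,4)] assms(5)
  by (metis list.inj_map_strong nat.inject)

lemma rgw_aux_fill:
  "\<forall>y\<in>set v. 1 \<le> y \<Longrightarrow> length v = count_list M False \<Longrightarrow>
   rgw_aux (Suc c) (fill M v) = rgw_aux c v"
  by (induction M v arbitrary: c rule: fill.induct) auto

lemma rgw_Cons_1_fill:
  "\<forall>y\<in>set v. 1 \<le> y \<Longrightarrow> length v = count_list M False \<Longrightarrow> rgw (1 # fill M v) = rgw v"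
  by (simp add: rgw_def rgw_aux_fill)

lemma rgw_aux_bounded: "rgw_aux c w \<Longrightarrow> x \<in> set w \<Longrightarrow> 1 \<le> x \<and> x \<le> c + length w"
  by (induction c w rule: rgw_aux.induct) fastforce+

lemma rgw_pos: "rgw v \<Longrightarrow> y \<in> set v \<Longrightarrow> 1 \<le> y"
  unfolding rgw_def using rgw_aux_bounded by blast

lemma finite_rgw_length: "finite {v. rgw v \<and> length v = m \<and> P v}"
proof (rule rev_finite_subset)
  show "finite {v. set v \<subseteq> {0..m} \<and> length v = m}"
    by (rule finite_lists_length_eq) simp
  show "{v. rgw v \<and> length v = m \<and> P v} \<subseteq> {v. set v \<subseteq> {0..m} \<and> length v = m}"
    unfolding rgw_def using rgw_aux_bounded[of 0] by fastforce
qed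

subsection \<open>Pattern containment\<close>

lemma set_subseq_subset: "subseq u w \<Longrightarrow> set u \<subseteq> set w"
  by (auto simp: subseq_conv_nths dest: set_nths_subset[THEN subsetD])

lemma contains_iff_subseq: "contains w p \<longleftrightarrow> (\<exists>u. subseq u w \<and> order_iso u p)"
  unfolding contains_def subseq_conv_nths by auto

lemma order_iso_map:
  assumes "\<forall>x\<in>set u. \<forall>y\<in>set u. x < y \<longleftrightarrow> f x < f y"
  shows "order_iso (map f u) p \<longleftrightarrow> order_iso u p"
  using assms unfolding order_iso_def by (auto simp: nth_mem)

lemma order_iso_spike_iff:
  assumes "p \<ge> 1"
  shows "order_iso u (spike p q (1::nat) 2) \<longleftrightarrow> (\<exists>x y. x < y \<and> u = spike p q x y)"
proof
  assume iso: "order_iso u (spike p q (1::nat) 2)"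
  then have len: "length u = p + 1 + q" by (simp add: order_iso_def)
  have cmp: "u ! i < u ! j \<longleftrightarrow> spike p q (1::nat) 2 ! i < spike p q 1 2 ! j"
    if "i < p + 1 + q" "j < p + 1 + q" for i j
    using iso len that unfolding order_iso_def by simp
  have "u ! 0 < u ! p"
    using cmp[of 0 p] assms by (simp add: nth_spike)
  moreover have "u ! i = u ! 0" if "i < p + 1 + q" "i \<noteq> p" for i
    using cmp[of i 0] cmp[of 0 i] that assms by (simp add: nth_spike)
  then have "u = spike p q (u ! 0) (u ! p)"
    by (intro nth_equalityI) (auto simp: len nth_spike)
  ultimately show "\<exists>x y. x < y \<and> u = spike p q x y" by blast
next
  assume "\<exists>x y. x < y \<and> u = spike p q x y"
  then show "order_iso u (spike p q (1::nat) 2)"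
    unfolding order_iso_def by (auto simp: nth_spike split: if_splits)
qed

lemma contains_spike_iff:
  "p \<ge> 1 \<Longrightarrow> contains w (spike p q 1 2) \<longleftrightarrow> (\<exists>x y. x < y \<and> subseq (spike p q x y) w)"
  unfolding contains_iff_subseq order_iso_spike_iff by blast

lemma order_iso_Cons_shift1_iff:
  assumes "\<forall>t\<in>set \<tau>. 1 \<le> t"
  shows "order_iso (x # u) (shift1 \<tau>) \<longleftrightarrow> (\<forall>z\<in>set u. x < z) \<and> order_iso u \<tau>"
proof -
  have "\<forall>i<length \<tau>. 1 \<le> \<tau> ! i" using assms by (simp add: all_set_conv_all_nth)
  then show ?thesis
    unfolding order_iso_def shift1_def
    by (auto simp: All_less_Suc2 all_set_conv_all_nth dest: less_imp_not_less)
qed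

lemma subseq_map_right: "subseq xs (map f ys) \<Longrightarrow> \<exists>zs. subseq zs ys \<and> xs = map f zs"
  by (auto simp: subseq_conv_nths nths_map)

lemma contains_spike_split:
  assumes p: "p \<ge> 1" and pos: "\<forall>x\<in>set w. 1 \<le> x" and rest: "filter (\<lambda>x. x \<noteq> 1) w = map Suc v"
  shows "contains w (spike p q 1 2) \<longleftrightarrow>
         contains v (spike p q 1 2) \<or> subseq (spike p q True False) (map (\<lambda>x. x = 1) w)"
proof
  assume "contains w (spike p q 1 2)"
  then obtain x y where xy: "x < y" and occ: "subseq (spike p q x y) w"
    using contains_spike_iff[OF p] by blast
  have "1 \<le> x"
    using pos set_subseq_subset[OF occ] set_spike[OF p, of q x y] by auto
  show "contains v (spike p q 1 2) \<or> subseq (spike p q True False) (map (\<lambda>x. x = 1) w)"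
  proof (cases "x = 1")
    case True
    with xy show ?thesis
      using subseq_map[OF occ, of "\<lambda>x. x = 1"] by (simp add: map_spike)
  next
    case False
    with \<open>1 \<le> x\<close> xy have "filter (\<lambda>x. x \<noteq> 1) (spike p q x y) = spike p q x y"
      by (simp add: set_spike[OF p])
    then have "subseq (spike p q x y) (map Suc v)"
      using subseq_filter[OF occ, of "\<lambda>x. x \<noteq> 1"] rest by simp
    from subseq_map[OF this, of "\<lambda>z. z - 1"]
    have "subseq (spike p q (x - 1) (y - 1)) v" by (simp add: map_spike comp_def)
    moreover have "x - 1 < y - 1" using False \<open>1 \<le> x\<close> xy by simp
    ultimately show ?thesis using contains_spike_iff[OF p] by blast
  qed
next
  assume "contains v (spike p q 1 2) \<or> subseq (spike p q True False) (map (\<lambda>x. x = 1) w)"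
  then show "contains w (spike p q 1 2)"
  proof
    assume "contains v (spike p q 1 2)"
    then obtain x y where xy: "x < y" and occ: "subseq (spike p q x y) v"
      using contains_spike_iff[OF p] by blast
    have "subseq (spike p q (Suc x) (Suc y)) (filter (\<lambda>x. x \<noteq> 1) w)"
      using subseq_map[OF occ, of Suc] rest by (simp add: map_spike)
    then have "subseq (spike p q (Suc x) (Suc y)) w"
      using subseq_filter_left subseq_order.trans by blast
    with xy show ?thesis using contains_spike_iff[OF p] by blast
  next
    assume "subseq (spike p q True False) (map (\<lambda>x. x = 1) w)"
    then obtain u where occ: "subseq u w" and mask: "map (\<lambda>x. x = 1) u = spike p q True False"
      by (metis subseq_map_right)
    then have len: "length u = p + 1 + q" by (metis length_map length_spike)
    have u_eq_1: "u ! i = 1 \<longleftrightarrow> i \<noteq> p" if "i < p + 1 + q" for i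
      using arg_cong[OF mask, of "\<lambda>xs. xs ! i"] that len by (simp add: nth_spike)
    have "u ! p \<in> set w" using set_subseq_subset[OF occ] len by (auto intro: nth_mem)
    then have "1 < u ! p" using pos u_eq_1[of p] by fastforce
    moreover have "u = spike p q 1 (u ! p)"
      by (rule nth_equalityI) (use len u_eq_1 in \<open>auto simp: nth_spike\<close>)
    ultimately show ?thesis using occ contains_spike_iff[OF p] by metis
  qed
qed

lemma contains_Cons_1_shift1_iff:
  assumes pos: "\<forall>x\<in>set W. 1 \<le> x" and rest: "filter (\<lambda>x. x \<noteq> 1) W = map Suc v"
    and \<tau>: "\<forall>t\<in>set \<tau>. 1 \<le> t"
  shows "contains (1 # W) (shift1 \<tau>) \<longleftrightarrow> contains v \<tau>"
proof
  assume "contains (1 # W) (shift1 \<tau>)"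
  then obtain u where occ: "subseq u (1 # W)" and iso: "order_iso u (shift1 \<tau>)"
    unfolding contains_iff_subseq by blast
  obtain x u' where u: "u = x # u'"
    using iso by (cases u) (auto simp: order_iso_def shift1_def)
  have above: "\<forall>z\<in>set u'. x < z" and iso': "order_iso u' \<tau>"
    using iso order_iso_Cons_shift1_iff[OF \<tau>] u by blast+
  have "1 \<le> x" using set_subseq_subset[OF occ] pos u by auto
  then have "filter (\<lambda>x. x \<noteq> 1) u' = u'" using above by (auto intro: filter_True)
  then have "subseq u' (map Suc v)"
    using subseq_filter[OF subseq_Cons'[OF occ[unfolded u]], of "\<lambda>x. x \<noteq> 1"] rest by simp
  from subseq_map[OF this, of "\<lambda>z. z - 1"]
  have "subseq (map (\<lambda>z. z - 1) u') v" by (simp add: comp_def)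
  moreover have "order_iso (map (\<lambda>z. z - 1) u') \<tau>"
  proof -
    have "a < b \<longleftrightarrow> a - 1 < b - 1" if "a \<in> set u'" "b \<in> set u'" for a b
      using above that \<open>1 \<le> x\<close> by fastforce
    then show ?thesis using iso' order_iso_map[of u' "\<lambda>z. z - 1"] by blast
  qed
  ultimately show "contains v \<tau>" unfolding contains_iff_subseq by blast
next
  assume "contains v \<tau>"
  then obtain u where occ: "subseq u v" and iso: "order_iso u \<tau>"
    unfolding contains_iff_subseq by blast
  have "subseq (map Suc u) (filter (\<lambda>x. x \<noteq> 1) W)"
    using subseq_map[OF occ, of Suc] rest by simp
  then have "subseq (1 # map Suc u) (1 # W)"
    using subseq_filter_left subseq_order.trans by fastforce
  moreover have "order_iso (1 # map Suc u) (shift1 \<tau>)"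
  proof -
    have "z \<noteq> 0" if "z \<in> set u" for z
      using set_subseq_subset[OF occ] that arg_cong[OF rest, of set] by force
    then have "\<forall>z\<in>set u. 1 \<le> z" by (simp add: Suc_le_eq)
    then show ?thesis using iso order_iso_Cons_shift1_iff[OF \<tau>] order_iso_map[of u Suc] by auto
  qed
  ultimately show "contains (1 # W) (shift1 \<tau>)" unfolding contains_iff_subseq by blast
qed

definition avoiders :: "nat list \<Rightarrow> nat list set \<Rightarrow> nat \<Rightarrow> nat list set" where
  "avoiders \<sigma> R m = {w. rgw w \<and> length w = m \<and> avoids w \<sigma> \<and> (\<forall>\<tau>\<in>R. avoids w \<tau>)}"

lemma fcount_of_nat: "fcount \<sigma> R (int m) = int (card (avoiders \<sigma> R m))"
  by (simp add: fcount_def avoiders_def)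

lemma finite_avoiders: "finite (avoiders \<sigma> R m)"
  unfolding avoiders_def by (rule finite_rgw_length)

lemma Cons_1_fill_in_avoiders_iff:
  assumes a: "a \<ge> 1" and T: "\<forall>\<tau>\<in>T. rgw \<tau>"
    and pos: "\<forall>y\<in>set v. 1 \<le> y" and len: "length v = count_list M False"
  shows "1 # fill M v \<in> avoiders (spike a b 1 2) (shift1 ` T) (Suc L) \<longleftrightarrow>
         (length M = L \<and> \<not> subseq (spike (a - 1) b True False) M) \<and>
         v \<in> avoiders (spike a b 1 2) T (count_list M False)"
proof -
  let ?w = "1 # fill M v"
  have w_pos: "\<forall>x\<in>set ?w. 1 \<le> x" using fill_pos by auto
  have rest: "filter (\<lambda>x. x \<noteq> 1) (fill M v) = map Suc v"
    by (rule filter_neq_1_fill[OF pos len])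
  have "spike a b True False = True # spike (a - 1) b True False"
    using a by (cases a) (auto simp: spike_Suc)
  then have \<sigma>: "contains ?w (spike a b 1 2) \<longleftrightarrow>
      contains v (spike a b 1 2) \<or> subseq (spike (a - 1) b True False) M"
    using contains_spike_split[OF a w_pos] rest map_eq_1_fill[OF pos len] by simp
  have T': "contains ?w (shift1 \<tau>) \<longleftrightarrow> contains v \<tau>" if "\<tau> \<in> T" for \<tau>
    using contains_Cons_1_shift1_iff[OF _ rest] fill_pos T that rgw_pos by blast
  show ?thesis
    using \<sigma> T' length_fill[OF len] rgw_Cons_1_fill[OF pos len] len
    unfolding avoiders_def avoids_def by auto
qed

lemma bij_betw_Cons_1_fill:
  assumes a: "a \<ge> 1" and T: "\<forall>\<tau>\<in>T. rgw \<tau>"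
  shows "bij_betw (\<lambda>(M, v). 1 # fill M v)
           (SIGMA M:{M. length M = L \<and> \<not> subseq (spike (a - 1) b True False) M}.
              avoiders (spike a b 1 2) T (count_list M False))
           (avoiders (spike a b 1 2) (shift1 ` T) (Suc L))"
    (is "bij_betw ?f ?S ?A")
proof (rule bij_betwI')
  have split: "\<forall>y\<in>set v. 1 \<le> y" "length v = count_list M False" if "(M, v) \<in> ?S" for M v
    using that by (auto simp: avoiders_def dest: rgw_pos)
  show "(?f P = ?f Q) = (P = Q)" if "P \<in> ?S" "Q \<in> ?S" for P Q
  proof -
    obtain M v M' v' where P: "P = (M, v)" and Q: "Q = (M', v')" by fastforce
    show ?thesis
      using that fill_inject[OF split[of M v] split[of M' v']] unfolding P Q by auto
  qed
  show "?f P \<in> ?A" if "P \<in> ?S" for P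
    using that split Cons_1_fill_in_avoiders_iff[OF a T] by (cases P) simp
next
  fix w
  assume w: "w \<in> ?A"
  then obtain W where W: "w = 1 # W"
    by (cases w) (auto simp: avoiders_def rgw_def)
  have pos: "\<forall>x\<in>set W. 1 \<le> x" using w W by (auto simp: avoiders_def dest: rgw_pos)
  define M where "M = map (\<lambda>x. x = 1) W"
  define v where "v = map (\<lambda>x. x - 1) (filter (\<lambda>x. x \<noteq> 1) W)"
  have fill: "fill M v = W" unfolding M_def v_def by (rule fill_map_eq_1_filter_neq_1[OF pos])
  have v_pos: "\<forall>y\<in>set v. 1 \<le> y" using pos by (auto simp: v_def)
  have len: "length v = count_list M False"
    unfolding v_def M_def by (induction W) auto
  have "(M, v) \<in> ?S"
    using w Cons_1_fill_in_avoiders_iff[OF a T v_pos len] by (simp add: W fill)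
  moreover have "w = ?f (M, v)" by (simp add: W fill)
  ultimately show "\<exists>P\<in>?S. w = ?f P" by blast
qed

lemma card_avoiders_shift1:
  assumes a: "a \<ge> 1" and T: "\<forall>\<tau>\<in>T. rgw \<tau>"
  shows "int (card (avoiders (spike a b 1 2) (shift1 ` T) (Suc L))) =
    (\<Sum>j\<le>L. spike_free_count (a - 1 + b) L j * int (card (avoiders (spike a b 1 2) T (L - j))))"
proof -
  let ?S = "{M. length M = L \<and> \<not> subseq (spike (a - 1) b True False) M}"
  let ?B = "\<lambda>m. card (avoiders (spike a b 1 2) T m)"
  have finite_S: "finite ?S" by (rule finite_bool_lists_length)
  have "card (avoiders (spike a b 1 2) (shift1 ` T) (Suc L)) =
      card (SIGMA M:?S. avoiders (spike a b 1 2) T (count_list M False))"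
    using bij_betw_same_card[OF bij_betw_Cons_1_fill[OF a T]] by simp
  also have "\<dots> = (\<Sum>M\<in>?S. ?B (count_list M False))"
    by (rule card_SigmaI[OF finite_S]) (simp add: finite_avoiders)
  also have "\<dots> = (\<Sum>M\<in>?S. ?B (L - count_list M True))"
  proof (rule sum.cong[OF refl])
    fix M assume "M \<in> ?S"
    then have "count_list M False = L - count_list M True"
      using count_list_True_False[of M] by simp
    then show "?B (count_list M False) = ?B (L - count_list M True)" by simp
  qed
  also have "\<dots> = (\<Sum>j\<le>L. \<Sum>M\<in>{M \<in> ?S. count_list M True = j}. ?B (L - count_list M True))"
    using count_le_length by (intro sum.group[symmetric] finite_S) auto
  also have "\<dots> = (\<Sum>j\<le>L. card (spike_free_masks (a - 1) b L j) * ?B (L - j))"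
    by (intro sum.cong refl) (simp add: spike_free_masks_def conj_commute conj_left_commute)
  finally show ?thesis
    by (simp add: card_spike_free_masks)
qed

lemma spike_free_count_as_gbinom:
  assumes "1 \<le> i" "i \<le> int n"
  shows "spike_free_count c (n - 1) (nat (i - 1)) =
    (if i \<le> int c then gbinom (int n - 1) (i - 1) else gbinom (int n - i + int c - 1) (int c - 1))"
proof -
  have "gbinom (int n - 1) (i - 1) = int ((n - 1) choose nat (i - 1))"
    using assms gbinom_of_nat[of "n - 1" "nat (i - 1)"] by simp
  moreover have "int (n - 1) - int (nat (i - 1)) + int c - 1 = int n - i + int c - 1"
    using assms by simp
  ultimately show ?thesis
    using assms by (auto simp: spike_free_count_def)
qed

lemma sum_spike_free_count_split:
  fixes f :: "int \<Rightarrow> int"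
  assumes "n \<ge> 1" and f_neg: "\<And>m. m < 0 \<Longrightarrow> f m = 0"
  shows "(\<Sum>j<n. spike_free_count c (n - 1) j * f (int n - 1 - int j)) =
     (\<Sum>i\<in>{1..int c}. f (int n - i) * gbinom (int n - 1) (i - 1))
   + (\<Sum>i\<in>{int c + 1..int n}. f (int n - i) * gbinom (int n - i + int c - 1) (int c - 1))"
proof -
  let ?head = "\<lambda>i. f (int n - i) * gbinom (int n - 1) (i - 1)"
  let ?tail = "\<lambda>i. f (int n - i) * gbinom (int n - i + int c - 1) (int c - 1)"
  have "(\<Sum>j<n. spike_free_count c (n - 1) j * f (int n - 1 - int j)) =
      (\<Sum>i\<in>{1..int n}. spike_free_count c (n - 1) (nat (i - 1)) * f (int n - i))"
    by (rule sum.reindex_bij_witness[of _ "\<lambda>i. nat (i - 1)" "\<lambda>j. int j + 1"])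
      (auto simp: algebra_simps)
  also have "\<dots> = (\<Sum>i\<in>{1..int n}. if i \<le> int c then ?head i else ?tail i)"
  proof (rule sum.cong[OF refl])
    fix i assume "i \<in> {1..int n}"
    then show "spike_free_count c (n - 1) (nat (i - 1)) * f (int n - i) =
        (if i \<le> int c then ?head i else ?tail i)"
      using spike_free_count_as_gbinom[of i n c] by simp
  qed
  also have "\<dots> = (\<Sum>i\<in>{1..int n} \<inter> {i. i \<le> int c}. ?head i) + (\<Sum>i\<in>{1..int n} \<inter> - {i. i \<le> int c}. ?tail i)"
    by (rule sum.If_cases) simp
  also have "(\<Sum>i\<in>{1..int n} \<inter> {i. i \<le> int c}. ?head i) = (\<Sum>i\<in>{1..int c}. ?head i)"
  proof (rule sum.mono_neutral_left)
    show "\<forall>i\<in>{1..int c} - {1..int n} \<inter> {i. i \<le> int c}. ?head i = 0"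
      using f_neg by force
  qed auto
  also have "{1..int n} \<inter> - {i. i \<le> int c} = {int c + 1..int n}"
    by auto
  finally show ?thesis .
qed

lemma fcount_shift1:
  assumes a: "a \<ge> 1" and T: "\<forall>\<tau>\<in>T. rgw \<tau>" and "n \<ge> 1"
  shows "fcount (spike a b 1 2) (shift1 ` T) (int n) =
    (\<Sum>j<n. spike_free_count (a - 1 + b) (n - 1) j * fcount (spike a b 1 2) T (int n - 1 - int j))"
proof -
  obtain L where n: "n = Suc L" using \<open>n \<ge> 1\<close> by (cases n) auto
  have "fcount (spike a b 1 2) (shift1 ` T) (int n) =
      int (card (avoiders (spike a b 1 2) (shift1 ` T) (Suc L)))"
    by (simp only: n fcount_of_nat)
  also have "\<dots> = (\<Sum>j\<le>L. spike_free_count (a - 1 + b) L j * int (card (avoiders (spike a b 1 2) T (L - j))))"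
    by (rule card_avoiders_shift1[OF a T])
  also have "\<dots> = (\<Sum>j\<le>L. spike_free_count (a - 1 + b) L j * fcount (spike a b 1 2) T (int n - 1 - int j))"
    by (intro sum.cong refl) (simp add: n fcount_of_nat[symmetric] of_nat_diff)
  finally show ?thesis
    by (simp add: n lessThan_Suc_atMost)
qed

theorem lemma4p6:
  fixes a b n :: nat and T :: "nat list set"
  assumes "a \<ge> 1" and "n \<ge> 1"
    and "\<forall>\<tau>\<in>T. rgw \<tau>"
  defines "\<sigma> \<equiv> replicate a 1 @ [2] @ replicate b 1"
    and "k \<equiv> int a + int b + 1"
  shows "fcount \<sigma> (shift1 ` T) (int n) =
     (\<Sum>i\<in>{1..k-2}. fcount \<sigma> T (int n - i) * gbinom (int n - 1) (i - 1))
   + (\<Sum>i\<in>{k-1..int n}. fcount \<sigma> T (int n - i) * gbinom (int n - i + k - 3) (k - 3))"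
proof -
  define c where "c = a - 1 + b"
  have \<sigma>: "\<sigma> = spike a b 1 2" by (simp add: \<sigma>_def spike_def)
  have k: "k - 2 = int c" "k - 1 = int c + 1" "k - 3 = int c - 1"
    "\<And>i. int n - i + k - 3 = int n - i + int c - 1"
    using \<open>a \<ge> 1\<close> by (simp_all add: k_def c_def)
  have "fcount \<sigma> (shift1 ` T) (int n) =
      (\<Sum>j<n. spike_free_count c (n - 1) j * fcount \<sigma> T (int n - 1 - int j))"
    unfolding \<sigma> c_def by (rule fcount_shift1[OF assms(1,3,2)])
  also have "\<dots> = (\<Sum>i\<in>{1..int c}. fcount \<sigma> T (int n - i) * gbinom (int n - 1) (i - 1))
     + (\<Sum>i\<in>{int c + 1..int n}. fcount \<sigma> T (int n - i) * gbinom (int n - i + int c - 1) (int c - 1))"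
    using \<open>n \<ge> 1\<close> by (rule sum_spike_free_count_split) (simp add: fcount_def)
  finally show ?thesis unfolding k .
qed

end
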